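(* Let $Q$ be a finite poset, $X_Q$ its cube complex, and let $P_i=C(I_i,M_i)$ and $P_{i+1}=C(I_{i+1},M_{i+1})$ be consecutive cubes of a valid cube sequence in $X_Q$. Then the interval $X[P_i,P_{i+1}]$ is a truncated CAT(0) orthant space whose origin is the vertex corresponding to the order ideal $I_i$.
   Context: For a finite poset $Q$, $X_Q$ is the cube complex whose vertices are the order ideals of $Q$ and with a cube $C(I,M)$ for each order ideal $I$ and subset $M$ of the set of maximal elements of $I$, whose vertices are $I\setminus S$, $S\subseteq M$. A valid cube sequence is a sequence of cubes $C(I_1,M_1),\dots,C(I_k,M_k)$ of $X_Q$ such that (a) $I_1\subset\cdots\subset I_k=Q$; (b) $I_1=M_1$ and $I_j\setminus I_{j-1}\subseteq M_j$ for $1<j\le k$; (c) each $M_j$ is a maximal antichain of $Q$. For cubes $C,D$, the interval $X[C,D]$ is the subcomplex consisting of all cubes all of whose vertices lie on at least one edge geodesic between a vertex of $C$ and a vertex of $D$. A CAT(0) orthant space $(V,\Omega)$ is given by a set $V$ of coordinates and a flag simplicial complex $\Omega$ on $V$: it is the union of orthants $\mathbb{R}^{|F|}_{\ge 0}$ (non-negative vectors with coordinates indexed by $F$), one for each face $F$ of $\Omega$, identified along subcones of common coordinates, all sharing the origin. A truncated CAT(0) orthant space is obtained by replacing each orthant $\mathbb{R}^{|F|}_{\ge0}$ by the unit cube $[0,1]^{|F|}$; its origin is the common vertex $0$. *)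

theory Defs
  imports Main
begin

text \<open>A finite poset is a finite carrier set Q inside a type of class order.\<close>

definition order_ideal :: "'a::order set \<Rightarrow> 'a set \<Rightarrow> bool" where
  "order_ideal Q I \<longleftrightarrow> I \<subseteq> Q \<and> (\<forall>x\<in>I. \<forall>y\<in>Q. y \<le> x \<longrightarrow> y \<in> I)"

definition maxel :: "'a::order set \<Rightarrow> 'a set" where
  "maxel I = {x \<in> I. \<not> (\<exists>y\<in>I. x < y)}"

definition antichain :: "'a::order set \<Rightarrow> bool" where
  "antichain A \<longleftrightarrow> (\<forall>x\<in>A. \<forall>y\<in>A. x \<le> y \<longrightarrow> x = y)"

definition max_antichain :: "'a::order set \<Rightarrow> 'a set \<Rightarrow> bool" where
  "max_antichain Q A \<longleftrightarrow> A \<subseteq> Q \<and> antichain A \<and>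
     (\<forall>B. A \<subset> B \<and> B \<subseteq> Q \<longrightarrow> \<not> antichain B)"

definition is_cube :: "'a::order set \<Rightarrow> 'a set \<Rightarrow> 'a set \<Rightarrow> bool" where
  "is_cube Q I M \<longleftrightarrow> order_ideal Q I \<and> M \<subseteq> maxel I"

definition cube_verts :: "'a set \<Rightarrow> 'a set \<Rightarrow> 'a set set" where
  "cube_verts I M = (\<lambda>S. I - S) ` Pow M"

definition cubes :: "'a::order set \<Rightarrow> 'a set set set" where
  "cubes Q = {cube_verts I M | I M. is_cube Q I M}"

definition adj :: "'a::order set \<Rightarrow> 'a set \<Rightarrow> 'a set \<Rightarrow> bool" where
  "adj Q J K \<longleftrightarrow> (\<exists>I m. is_cube Q I {m} \<and> {J, K} = cube_verts I {m})"

definition walk :: "'a::order set \<Rightarrow> 'a set list \<Rightarrow> bool" where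
  "walk Q xs \<longleftrightarrow> xs \<noteq> [] \<and> (\<forall>i. Suc i < length xs \<longrightarrow> adj Q (xs ! i) (xs ! Suc i))"

definition edist :: "'a::order set \<Rightarrow> 'a set \<Rightarrow> 'a set \<Rightarrow> nat" where
  "edist Q u w = (LEAST n. \<exists>xs. walk Q xs \<and> hd xs = u \<and> last xs = w \<and> length xs = Suc n)"

definition on_geodesic :: "'a::order set \<Rightarrow> 'a set \<Rightarrow> 'a set \<Rightarrow> 'a set \<Rightarrow> bool" where
  "on_geodesic Q u w v \<longleftrightarrow> (\<exists>xs. walk Q xs \<and> hd xs = u \<and> last xs = w \<and>
      length xs = Suc (edist Q u w) \<and> v \<in> set xs)"

definition interval :: "'a::order set \<Rightarrow> 'a set set \<Rightarrow> 'a set set \<Rightarrow> 'a set set set" where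
  "interval Q C D = {E \<in> cubes Q. \<forall>v\<in>E. \<exists>c\<in>C. \<exists>d\<in>D. on_geodesic Q c d v}"

definition valid_cube_seq :: "'a::order set \<Rightarrow> ('a set \<times> 'a set) list \<Rightarrow> bool" where
  "valid_cube_seq Q seq \<longleftrightarrow> seq \<noteq> [] \<and>
     (\<forall>j < length seq. is_cube Q (fst (seq ! j)) (snd (seq ! j))) \<and>
     (\<forall>j. Suc j < length seq \<longrightarrow> fst (seq ! j) \<subset> fst (seq ! Suc j)) \<and>
     fst (last seq) = Q \<and>
     fst (seq ! 0) = snd (seq ! 0) \<and>
     (\<forall>j. 0 < j \<and> j < length seq \<longrightarrow> fst (seq ! j) - fst (seq ! (j - 1)) \<subseteq> snd (seq ! j)) \<and>
     (\<forall>j < length seq. max_antichain Q (snd (seq ! j)))"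

definition flag_complex :: "'v set \<Rightarrow> 'v set set \<Rightarrow> bool" where
  "flag_complex V \<Omega> \<longleftrightarrow>
     (\<forall>F\<in>\<Omega>. finite F \<and> F \<subseteq> V) \<and>
     (\<forall>F\<in>\<Omega>. \<forall>G. G \<subseteq> F \<longrightarrow> G \<in> \<Omega>) \<and>
     (\<forall>v\<in>V. {v} \<in> \<Omega>) \<and>
     (\<forall>F. finite F \<and> F \<subseteq> V \<and> (\<forall>x\<in>F. \<forall>y\<in>F. {x, y} \<in> \<Omega>) \<longrightarrow> F \<in> \<Omega>)"

text \<open>Cubes of the truncated orthant space: a vertex is a 0/1 vector, identified with its
  support (a face of Omega); a cube of the unit cube [0,1]^B (B a face) has coordinates in A
  fixed to 1, those in B - A free, the rest 0, so its vertex set is {S. A \<subseteq> S \<subseteq> B}.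
  The origin is the vertex {}.\<close>
definition trunc_cubes :: "'v set set \<Rightarrow> 'v set set set" where
  "trunc_cubes \<Omega> = {{S. A \<subseteq> S \<and> S \<subseteq> B} | A B. A \<subseteq> B \<and> B \<in> \<Omega>}"

text \<open>Coordinates are taken as natural numbers (no loss: the complexes here are finite).\<close>
definition trunc_orthant_space_with_origin :: "'b set set \<Rightarrow> 'b \<Rightarrow> bool" where
  "trunc_orthant_space_with_origin K org \<longleftrightarrow>
     (\<exists>(V :: nat set) \<Omega> \<phi>. flag_complex V \<Omega> \<and> bij_betw \<phi> (\<Union>K) \<Omega> \<and>
        (\<lambda>E. \<phi> ` E) ` K = trunc_cubes \<Omega> \<and> org \<in> \<Union>K \<and> \<phi> org = {})"

end

theory Submission
  imports Defs "HOL-Library.Countable_Set"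
begin

text \<open>Two order ideals are adjacent in X_Q exactly when they differ in one element, so the
  edge distance is the size of the symmetric difference and the vertices on geodesics from c
  to d are the ideals between c \<inter> d and c \<union> d. For consecutive cubes C(A,M), C(B,N) of a
  valid sequence we have M = maxel A (M is a maximal antichain) and B - A \<subseteq> N, so the vertices
  of the interval are the ideals v with A - M \<subseteq> v \<subseteq> B. Sending v to its symmetric difference
  with A identifies them with the faces of a flag complex on M \<union> (B - A), the only constraint
  being that an element s of M cannot be removed while some u > s is added; cubes of the
  interval correspond to subcubes of unit cubes on faces, and A goes to the origin.\<close>

section \<open>Edge geodesics between order ideals\<close>

lemma maxel_subset: "maxel I \<subseteq> I"
  unfolding maxel_def by auto

lemma order_ideal_Diff_maxel:
  assumes "order_ideal Q I" "S \<subseteq> maxel I"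
  shows "order_ideal Q (I - S)"
  using assms unfolding order_ideal_def maxel_def
  by (metis (mono_tags, lifting) Diff_iff mem_Collect_eq order_le_less subset_eq)

lemma order_ideal_finite: "finite Q \<Longrightarrow> order_ideal Q I \<Longrightarrow> finite I"
  unfolding order_ideal_def using finite_subset by blast

lemma order_ideal_cube_verts:
  assumes "is_cube Q I M" "v \<in> cube_verts I M"
  shows "order_ideal Q v"
  using assms order_ideal_Diff_maxel unfolding is_cube_def cube_verts_def by blast

lemma cube_verts_singleton: "cube_verts I {m} = {I, I - {m}}"
  unfolding cube_verts_def by (auto simp: Pow_singleton_iff)

lemma adj_sym: "adj Q J K \<Longrightarrow> adj Q K J"
  unfolding adj_def by (metis insert_commute)

lemma adj_Diff_maxel:
  assumes "order_ideal Q I" "m \<in> maxel I"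
  shows "adj Q I (I - {m})"
  using assms unfolding adj_def is_cube_def by (auto simp: cube_verts_singleton)

lemma adjE:
  assumes "adj Q J K"
  obtains m where "order_ideal Q J" "order_ideal Q K" "sym_diff J K = {m}"
proof -
  obtain I m where cube: "is_cube Q I {m}" and JK: "{J, K} = {I, I - {m}}"
    using assms unfolding adj_def cube_verts_singleton by blast
  have "m \<in> I" using cube unfolding is_cube_def maxel_def by auto
  moreover have "order_ideal Q I" "order_ideal Q (I - {m})"
    using cube order_ideal_Diff_maxel unfolding is_cube_def by blast+
  moreover have "sym_diff I (I - {m}) = {m}" "sym_diff (I - {m}) I = {m}"
    using \<open>m \<in> I\<close> by auto
  ultimately show thesis
    using JK that unfolding doubleton_eq_iff by blast
qed

lemma walk_Cons_Cons_iff: "walk Q (a # b # r) \<longleftrightarrow> adj Q a b \<and> walk Q (b # r)"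
  unfolding walk_def by (auto simp: less_Suc_eq_0_disj)

lemma walk_Cons: "walk Q xs \<Longrightarrow> adj Q x (hd xs) \<Longrightarrow> walk Q (x # xs)"
  by (cases xs) (simp add: walk_def, simp add: walk_Cons_Cons_iff)

lemma walk_append:
  "walk Q xs \<Longrightarrow> walk Q ys \<Longrightarrow> last xs = hd ys \<Longrightarrow> walk Q (butlast xs @ ys)"
proof (induction xs rule: induct_list012)
  case (3 a b r)
  then have "walk Q (butlast (b # r) @ ys)" "adj Q a b"
    by (simp_all add: walk_Cons_Cons_iff)
  moreover have "hd (butlast (b # r) @ ys) = b"
    using "3.prems"(3) by (cases r) auto
  ultimately show ?case by (simp add: walk_Cons)
qed (simp_all add: walk_def)

lemma card_sym_diff_triangle:
  assumes "finite (sym_diff a b)" "finite (sym_diff b c)"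
  shows "finite (sym_diff a c) \<and> card (sym_diff a c) \<le> card (sym_diff a b) + card (sym_diff b c)"
proof -
  have "sym_diff a c \<subseteq> sym_diff a b \<union> sym_diff b c" by auto
  with assms show ?thesis
    by (meson card_Un_le card_mono finite_Un finite_subset le_trans)
qed

lemma walk_card_sym_diff_le:
  assumes "walk Q xs" "k + t < length xs"
  shows "finite (sym_diff (xs ! k) (xs ! (k + t))) \<and> card (sym_diff (xs ! k) (xs ! (k + t))) \<le> t"
  using assms(2)
proof (induction t)
  case (Suc t)
  have "adj Q (xs ! (k + t)) (xs ! (k + Suc t))"
    using assms(1) Suc.prems unfolding walk_def by simp
  then obtain m where "sym_diff (xs ! (k + t)) (xs ! (k + Suc t)) = {m}"
    by (rule adjE)
  then show ?case
    using Suc card_sym_diff_triangle[of "xs ! k" "xs ! (k + t)" "xs ! (k + Suc t)"] by simp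
qed simp

lemma maximal_in_Diff_maxel:
  assumes "order_ideal Q y" "x \<subseteq> Q" "m \<in> x - y" "\<forall>b \<in> x - y. m \<le> b \<longrightarrow> m = b"
  shows "m \<in> maxel x"
proof -
  have "z \<notin> x" if "m < z" for z
  proof
    assume "z \<in> x"
    moreover have "z \<notin> y"
      using assms(1-3) \<open>m < z\<close> unfolding order_ideal_def by (auto dest: less_imp_le)
    ultimately show False
      using assms(4) \<open>m < z\<close> by (auto dest: less_imp_le)
  qed
  then show ?thesis
    using assms(3) unfolding maxel_def by auto
qed

lemma minimal_in_Diff_insert:
  assumes "order_ideal Q x" "order_ideal Q y" "m \<in> y - x" "\<forall>b \<in> y - x. b \<le> m \<longrightarrow> m = b"
  shows "order_ideal Q (insert m x)" "m \<in> maxel (insert m x)"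
  using assms unfolding order_ideal_def maxel_def by (auto dest: less_imp_le)

text \<open>Removing a maximal element of x - y, or adding a minimal element of y - x, is an edge
  that decreases the symmetric difference with y by one.\<close>
lemma ex_adj_towards:
  assumes "finite Q" "order_ideal Q x" "order_ideal Q y" "x \<noteq> y"
  obtains x' m where "m \<in> sym_diff x y" "order_ideal Q x'" "adj Q x x'"
    "sym_diff x' y = sym_diff x y - {m}"
proof (cases "x - y = {}")
  case False
  moreover have "finite (x - y)"
    using assms(1,2) order_ideal_finite by blast
  ultimately obtain m where m: "m \<in> x - y" "\<forall>b \<in> x - y. m \<le> b \<longrightarrow> m = b"
    using finite_has_maximal by blast
  have "x \<subseteq> Q"
    using assms(2) unfolding order_ideal_def by blast
  then have "m \<in> maxel x"
    using maximal_in_Diff_maxel[OF assms(3) _ m] by blast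
  then have "order_ideal Q (x - {m})" "adj Q x (x - {m})"
    using order_ideal_Diff_maxel[OF assms(2), of "{m}"] adj_Diff_maxel[OF assms(2)] by auto
  moreover have "sym_diff (x - {m}) y = sym_diff x y - {m}"
    using m(1) by auto
  moreover have "m \<in> sym_diff x y"
    using m(1) by blast
  ultimately show thesis
    using that by blast
next
  case True
  then have "y - x \<noteq> {}"
    using assms(4) by auto
  moreover have "finite (y - x)"
    using assms(1,3) order_ideal_finite by blast
  ultimately obtain m where m: "m \<in> y - x" "\<forall>b \<in> y - x. b \<le> m \<longrightarrow> m = b"
    using finite_has_minimal by blast
  then have ideal: "order_ideal Q (insert m x)" and "m \<in> maxel (insert m x)"
    using minimal_in_Diff_insert[OF assms(2,3) m] by blast+
  then have "adj Q (insert m x) (insert m x - {m})"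
    by (rule adj_Diff_maxel)
  moreover have "insert m x - {m} = x"
    using m(1) by auto
  ultimately have "adj Q (insert m x) x"
    by simp
  moreover have "sym_diff (insert m x) y = sym_diff x y - {m}"
    using m(1) by auto
  moreover have "m \<in> sym_diff x y"
    using m(1) by blast
  ultimately show thesis
    using that ideal adj_sym by blast
qed

lemma ex_walk_card_sym_diff:
  assumes "finite Q" "order_ideal Q x" "order_ideal Q y"
  shows "\<exists>xs. walk Q xs \<and> hd xs = x \<and> last xs = y \<and> length xs = Suc (card (sym_diff x y))"
  using assms(2)
proof (induction "card (sym_diff x y)" arbitrary: x)
  case 0
  moreover have "finite (sym_diff x y)"
    using assms(1,3) "0.prems" order_ideal_finite by blast
  ultimately have "x = y"
    by auto
  then show ?case
    by (intro exI[of _ "[x]"]) (simp add: walk_def)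
next
  case (Suc n)
  then have "x \<noteq> y" by auto
  then obtain x' m where m: "m \<in> sym_diff x y" and x': "order_ideal Q x'" "adj Q x x'"
      "sym_diff x' y = sym_diff x y - {m}"
    by (rule ex_adj_towards[OF assms(1) Suc.prems assms(3)])
  have "finite (sym_diff x y)"
    using assms(1,3) Suc.prems order_ideal_finite by blast
  then have "n = card (sym_diff x' y)"
    using Suc.hyps(2) m x'(3) by simp
  then obtain xs where xs: "walk Q xs" "hd xs = x'" "last xs = y" "length xs = Suc n"
    using Suc.hyps(1) x'(1) by blast
  then have "walk Q (x # xs)"
    using x'(2) walk_Cons by blast
  then show ?case
    using xs Suc.hyps(2) by (intro exI[of _ "x # xs"]) auto
qed

lemma edist_eq_card_sym_diff:
  assumes "finite Q" "order_ideal Q c" "order_ideal Q d"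
  shows "edist Q c d = card (sym_diff c d)"
  unfolding edist_def
proof (rule Least_equality)
  show "\<exists>xs. walk Q xs \<and> hd xs = c \<and> last xs = d \<and> length xs = Suc (card (sym_diff c d))"
    using ex_walk_card_sym_diff assms by blast
next
  fix n assume "\<exists>xs. walk Q xs \<and> hd xs = c \<and> last xs = d \<and> length xs = Suc n"
  then obtain xs where xs: "walk Q xs" "hd xs = c" "last xs = d" "length xs = Suc n"
    by blast
  moreover have "xs \<noteq> []"
    using xs(4) by auto
  ultimately have "xs ! 0 = c" "xs ! (0 + n) = d"
    by (simp_all add: hd_conv_nth last_conv_nth)
  then show "card (sym_diff c d) \<le> n"
    using walk_card_sym_diff_le[OF xs(1), of 0 n] xs(4) by auto
qed

lemma card_sym_diff_add_eq_iff_between: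
  assumes "finite c" "finite d" "finite v"
  shows "card (sym_diff c v) + card (sym_diff v d) = card (sym_diff c d) \<longleftrightarrow>
    c \<inter> d \<subseteq> v \<and> v \<subseteq> c \<union> d"
proof -
  define I where "I = sym_diff c v \<inter> sym_diff v d"
  have "sym_diff c v \<union> sym_diff v d = sym_diff c d \<union> I" "sym_diff c d \<inter> I = {}"
    unfolding I_def by auto
  then have "card (sym_diff c v) + card (sym_diff v d) = card (sym_diff c d) + 2 * card I"
    using assms card_Un_Int[of "sym_diff c v" "sym_diff v d"] card_Un_disjoint[of "sym_diff c d" I]
    unfolding I_def by simp
  moreover have "I = {} \<longleftrightarrow> c \<inter> d \<subseteq> v \<and> v \<subseteq> c \<union> d"
    unfolding I_def by auto
  moreover have "finite I"
    unfolding I_def using assms by simp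
  ultimately show ?thesis
    by simp
qed

text \<open>A geodesic flips every element of the symmetric difference exactly once and nothing else.\<close>
lemma on_geodesic_iff:
  assumes "finite Q" "order_ideal Q c" "order_ideal Q d" "order_ideal Q v"
  shows "on_geodesic Q c d v \<longleftrightarrow> c \<inter> d \<subseteq> v \<and> v \<subseteq> c \<union> d"
proof -
  have fin: "finite c" "finite d" "finite v"
    using assms order_ideal_finite by blast+
  have triangle: "card (sym_diff c d) \<le> card (sym_diff c v) + card (sym_diff v d)"
    using fin by (intro conjunct2[OF card_sym_diff_triangle]) simp_all
  show ?thesis
  proof
    assume "on_geodesic Q c d v"
    then obtain xs where xs: "walk Q xs" "hd xs = c" "last xs = d"
        "length xs = Suc (card (sym_diff c d))" "v \<in> set xs"
      unfolding on_geodesic_def edist_eq_card_sym_diff[OF assms(1-3)] by blast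
    define n where "n = card (sym_diff c d)"
    obtain k where k: "k < length xs" "xs ! k = v"
      using xs(5) by (meson in_set_conv_nth)
    have "xs \<noteq> []" "k + (n - k) = n"
      using k xs(4) unfolding n_def by auto
    then have ends: "xs ! 0 = c" "xs ! (k + (n - k)) = d"
      using xs(2-4) unfolding n_def by (simp_all add: hd_conv_nth last_conv_nth)
    have "card (sym_diff c v) \<le> k" "card (sym_diff v d) \<le> n - k"
      using walk_card_sym_diff_le[OF xs(1), of 0 k] walk_card_sym_diff_le[OF xs(1), of k "n - k"]
        ends k xs(4) unfolding n_def by auto
    then show "c \<inter> d \<subseteq> v \<and> v \<subseteq> c \<union> d"
      using triangle card_sym_diff_add_eq_iff_between[OF fin] k xs(4) unfolding n_def by linarith
  next
    assume "c \<inter> d \<subseteq> v \<and> v \<subseteq> c \<union> d"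
    then have len: "card (sym_diff c v) + card (sym_diff v d) = card (sym_diff c d)"
      using card_sym_diff_add_eq_iff_between[OF fin] by blast
    obtain xs where xs: "walk Q xs" "hd xs = c" "last xs = v" "length xs = Suc (card (sym_diff c v))"
      using ex_walk_card_sym_diff[OF assms(1,2,4)] by blast
    obtain ys where ys: "walk Q ys" "hd ys = v" "last ys = d" "length ys = Suc (card (sym_diff v d))"
      using ex_walk_card_sym_diff[OF assms(1,4,3)] by blast
    have "walk Q (butlast xs @ ys)"
      using walk_append xs ys by metis
    moreover have "hd (butlast xs @ ys) = c"
      using xs(2-4) ys(2) by (cases xs rule: rev_cases) (auto simp: hd_append split: if_splits)
    moreover have "last (butlast xs @ ys) = d" "v \<in> set (butlast xs @ ys)"
      using ys(2-4) by (cases ys; simp)+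
    moreover have "length (butlast xs @ ys) = Suc (edist Q c d)"
      using xs(4) ys(4) len edist_eq_card_sym_diff[OF assms(1-3)] by simp
    ultimately show "on_geodesic Q c d v"
      unfolding on_geodesic_def by blast
  qed
qed

section \<open>Renaming the coordinates of a truncated orthant space\<close>

lemma image_set_interval:
  assumes "inj_on f B" "A \<subseteq> B"
  shows "image f ` {S. A \<subseteq> S \<and> S \<subseteq> B} = {S'. f ` A \<subseteq> S' \<and> S' \<subseteq> f ` B}"
proof (intro equalityI subsetI)
  fix S' assume S': "S' \<in> {S'. f ` A \<subseteq> S' \<and> S' \<subseteq> f ` B}"
  define S where "S = B \<inter> f -` S'"
  have "f ` S = S'" "A \<subseteq> S" "S \<subseteq> B"
    using S' assms unfolding S_def inj_on_def by auto
  then show "S' \<in> image f ` {S. A \<subseteq> S \<and> S \<subseteq> B}" by blast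
qed auto

lemma flag_complex_image:
  assumes "inj_on f V" "flag_complex V \<Omega>"
  shows "flag_complex (f ` V) (image f ` \<Omega>)"
  unfolding flag_complex_def
proof (intro conjI ballI allI impI)
  have faces: "\<And>F. F \<in> \<Omega> \<Longrightarrow> finite F \<and> F \<subseteq> V"
    and down: "\<And>F G. F \<in> \<Omega> \<Longrightarrow> G \<subseteq> F \<Longrightarrow> G \<in> \<Omega>"
    and vertices: "\<And>v. v \<in> V \<Longrightarrow> {v} \<in> \<Omega>"
    and cliques: "\<And>F. finite F \<Longrightarrow> F \<subseteq> V \<Longrightarrow> \<forall>x\<in>F. \<forall>y\<in>F. {x, y} \<in> \<Omega> \<Longrightarrow> F \<in> \<Omega>"
    using assms(2) unfolding flag_complex_def by (meson, meson, meson, meson)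
  show "finite F'" "F' \<subseteq> f ` V" if "F' \<in> image f ` \<Omega>" for F'
    using that faces by auto
  show "G' \<in> image f ` \<Omega>" if F': "F' \<in> image f ` \<Omega>" and "G' \<subseteq> F'" for F' G'
  proof -
    obtain F where "F \<in> \<Omega>" "G' \<subseteq> f ` F"
      using F' \<open>G' \<subseteq> F'\<close> by blast
    then obtain G where "G \<subseteq> F" "G' = f ` G"
      unfolding subset_image_iff by blast
    then show ?thesis
      using down \<open>F \<in> \<Omega>\<close> by blast
  qed
  show "{v'} \<in> image f ` \<Omega>" if v': "v' \<in> f ` V" for v'
  proof -
    obtain v where "v \<in> V" "v' = f v"
      using v' by blast
    then have "{v'} = f ` {v}" "{v} \<in> \<Omega>"
      using vertices by simp_all
    then show ?thesis by blast
  qed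
  fix F' assume F': "finite F' \<and> F' \<subseteq> f ` V \<and> (\<forall>x\<in>F'. \<forall>y\<in>F'. {x, y} \<in> image f ` \<Omega>)"
  define F where "F = f -` F' \<inter> V"
  have "finite F" "F \<subseteq> V"
    using F' finite_vimage_IntI[OF _ assms(1)] unfolding F_def by blast+
  moreover have "{x, y} \<in> \<Omega>" if "x \<in> F" "y \<in> F" for x y
  proof -
    have "{f x, f y} \<in> image f ` \<Omega>"
      using F' that unfolding F_def by blast
    then obtain G where G: "G \<in> \<Omega>" "f ` {x, y} = f ` G"
      by auto
    moreover have "{x, y} \<subseteq> V" "G \<subseteq> V"
      using that faces G(1) unfolding F_def by auto
    ultimately show ?thesis
      using inj_on_image_eq_iff[OF assms(1)] by metis
  qed
  ultimately have "F \<in> \<Omega>"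
    using cliques by blast
  moreover have "F' = f ` F"
    using F' unfolding F_def by auto
  ultimately show "F' \<in> image f ` \<Omega>"
    by blast
qed

lemma trunc_cubesI: "A \<subseteq> B \<Longrightarrow> B \<in> \<Omega> \<Longrightarrow> {S. A \<subseteq> S \<and> S \<subseteq> B} \<in> trunc_cubes \<Omega>"
  unfolding trunc_cubes_def by blast

lemma trunc_cubesE:
  assumes "C \<in> trunc_cubes \<Omega>"
  obtains A B where "A \<subseteq> B" "B \<in> \<Omega>" "C = {S. A \<subseteq> S \<and> S \<subseteq> B}"
  using assms unfolding trunc_cubes_def by blast

lemma trunc_cubes_image:
  assumes "inj_on f V" "\<forall>F\<in>\<Omega>. F \<subseteq> V"
  shows "(\<lambda>C. image f ` C) ` trunc_cubes \<Omega> = trunc_cubes (image f ` \<Omega>)"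
proof -
  have cube_image: "image f ` {S. A \<subseteq> S \<and> S \<subseteq> B} = {S'. f ` A \<subseteq> S' \<and> S' \<subseteq> f ` B}"
    if "A \<subseteq> B" "B \<in> \<Omega>" for A B
    using that assms(2) by (intro image_set_interval[OF inj_on_subset[OF assms(1)]]) auto
  show ?thesis
  proof (intro equalityI subsetI)
    fix C' assume "C' \<in> (\<lambda>C. image f ` C) ` trunc_cubes \<Omega>"
    then obtain C where "C \<in> trunc_cubes \<Omega>" "C' = image f ` C"
      by blast
    then obtain A B where "A \<subseteq> B" "B \<in> \<Omega>" "C' = image f ` {S. A \<subseteq> S \<and> S \<subseteq> B}"
      by (elim trunc_cubesE) simp
    then show "C' \<in> trunc_cubes (image f ` \<Omega>)"
      by (simp add: cube_image image_mono trunc_cubesI)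
  next
    fix C' assume "C' \<in> trunc_cubes (image f ` \<Omega>)"
    then obtain A' B' where AB': "A' \<subseteq> B'" "B' \<in> image f ` \<Omega>" "C' = {S'. A' \<subseteq> S' \<and> S' \<subseteq> B'}"
      by (rule trunc_cubesE)
    from AB'(2) obtain B where B: "B \<in> \<Omega>" "B' = f ` B"
      by blast
    then obtain A where A: "A \<subseteq> B" "A' = f ` A"
      using AB'(1) by (auto elim: subset_imageE)
    then have "C' = image f ` {S. A \<subseteq> S \<and> S \<subseteq> B}"
      using AB'(3) B cube_image by simp
    then show "C' \<in> (\<lambda>C. image f ` C) ` trunc_cubes \<Omega>"
      using trunc_cubesI[OF A(1) B(1)] by (rule image_eqI)
  qed
qed

lemma trunc_orthant_space_with_originI:
  fixes \<phi> :: "'b \<Rightarrow> 'v set"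
  assumes "flag_complex V \<Omega>" "countable V" "bij_betw \<phi> (\<Union>K) \<Omega>"
    "(\<lambda>E. \<phi> ` E) ` K = trunc_cubes \<Omega>" "org \<in> \<Union>K" "\<phi> org = {}"
  shows "trunc_orthant_space_with_origin K org"
proof -
  define f where "f = to_nat_on V"
  have inj: "inj_on f V"
    using assms(2) unfolding f_def by blast
  have faces: "\<forall>F\<in>\<Omega>. F \<subseteq> V"
    using assms(1) unfolding flag_complex_def by meson
  then have "inj_on (image f) \<Omega>"
    using inj_on_subset[OF inj_on_image_Pow[OF inj]] by blast
  then have "bij_betw (image f \<circ> \<phi>) (\<Union>K) (image f ` \<Omega>)"
    by (intro bij_betw_trans[OF assms(3)] inj_on_imp_bij_betw)
  moreover have "(\<lambda>E. (image f \<circ> \<phi>) ` E) ` K = trunc_cubes (image f ` \<Omega>)"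
    unfolding trunc_cubes_image[OF inj faces, symmetric] assms(4)[symmetric]
    by (simp add: image_comp)
  moreover have "flag_complex (f ` V) (image f ` \<Omega>)"
    using flag_complex_image[OF inj assms(1)] .
  ultimately show ?thesis
    unfolding trunc_orthant_space_with_origin_def using assms(5,6) by force
qed

section \<open>The interval between consecutive cubes\<close>

lemma sym_diff_image_cube_verts:
  assumes "M \<subseteq> I"
  shows "(\<lambda>v. sym_diff A v) ` cube_verts I M =
    {W. sym_diff A I - (M - A) \<subseteq> W \<and> W \<subseteq> sym_diff A I \<union> (M \<inter> A)}"
proof (intro equalityI subsetI)
  fix W assume W: "W \<in> {W. sym_diff A I - (M - A) \<subseteq> W \<and> W \<subseteq> sym_diff A I \<union> (M \<inter> A)}"
  define S where "S = (W \<inter> M \<inter> A) \<union> (M - A - W)"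
  have "sym_diff A (I - S) = W"
    using W assms unfolding S_def by auto
  moreover have "I - S \<in> cube_verts I M"
    unfolding cube_verts_def S_def by auto
  ultimately show "W \<in> (\<lambda>v. sym_diff A v) ` cube_verts I M"
    by (rule image_eqI[OF sym])
qed (use assms in \<open>auto simp: cube_verts_def\<close>)

locale consecutive_cubes =
  fixes Q :: "'a::order set" and A M B N :: "'a set"
  assumes finite_Q: "finite Q"
    and ideal_A: "order_ideal Q A" and ideal_B: "order_ideal Q B"
    and M_eq: "M = maxel A" and N_subset: "N \<subseteq> maxel B"
    and A_subset_B: "A \<subseteq> B" and B_diff_A_subset: "B - A \<subseteq> N"
begin

definition verts :: "'a set set" where
  "verts = {v. order_ideal Q v \<and> A - M \<subseteq> v \<and> v \<subseteq> B}"

text \<open>A vertex v is recorded by its symmetric difference with A: a coordinate in M removes a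
  maximal element of A, a coordinate in B - A adds a new element, and a face may not remove s
  while adding some u > s.\<close>
definition faces :: "'a set set" where
  "faces = {F. F \<subseteq> M \<union> (B - A) \<and> (\<forall>s\<in>F. \<forall>u\<in>F. s \<in> A \<longrightarrow> u \<notin> A \<longrightarrow> \<not> s < u)}"

lemma A_subset_Q: "A \<subseteq> Q" and B_subset_Q: "B \<subseteq> Q"
  using ideal_A ideal_B unfolding order_ideal_def by auto

lemma M_subset_A: "M \<subseteq> A"
  using M_eq maxel_subset by blast

lemma faces_downward_closed: "F \<in> faces \<Longrightarrow> G \<subseteq> F \<Longrightarrow> G \<in> faces"
  unfolding faces_def by blast

lemma sym_diff_in_faces:
  assumes "v \<in> verts"
  shows "sym_diff A v \<in> faces"
proof -
  have v: "order_ideal Q v" "A - M \<subseteq> v" "v \<subseteq> B"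
    using assms unfolding verts_def by auto
  have "\<not> s < u" if "s \<in> A - v" "u \<in> v - A" for s u
    using v(1) that A_subset_Q unfolding order_ideal_def by (auto dest: less_imp_le)
  then show ?thesis
    using v(2,3) unfolding faces_def by auto
qed

lemma order_ideal_sym_diff_face:
  assumes "F \<in> faces"
  shows "order_ideal Q (sym_diff A F)"
  unfolding order_ideal_def
proof (intro conjI ballI impI)
  have F: "F \<subseteq> M \<union> (B - A)" "\<And>s u. s \<in> F \<Longrightarrow> u \<in> F \<Longrightarrow> s \<in> A \<Longrightarrow> u \<notin> A \<Longrightarrow> \<not> s < u"
    using assms unfolding faces_def by auto
  show "sym_diff A F \<subseteq> Q"
    using F(1) A_subset_Q B_subset_Q M_subset_A by auto
  fix x y assume x: "x \<in> sym_diff A F" and y: "y \<in> Q" "y \<le> x"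
  consider "x \<in> A - F" | "x \<in> F - A"
    using x by blast
  then show "y \<in> sym_diff A F"
  proof cases
    case 1
    then have "y \<in> A"
      using ideal_A y unfolding order_ideal_def by blast
    moreover have "y \<notin> F \<or> y = x"
      using \<open>y \<in> A\<close> F(1) M_eq 1 y(2) unfolding maxel_def by (auto simp: order_le_less)
    ultimately show ?thesis
      using 1 by auto
  next
    case 2
    show ?thesis
    proof (cases "y \<in> A")
      case True
      then show ?thesis
        using 2 y(2) F(2)[of y x] by (auto simp: order_le_less)
    next
      case False
      have "x \<in> B"
        using 2 F(1) M_subset_A by auto
      then have "y \<in> B"
        using ideal_B y unfolding order_ideal_def by blast
      then have "y \<in> maxel B"
        using False B_diff_A_subset N_subset by blast
      then show ?thesis
        using y(2) 2 \<open>x \<in> B\<close> unfolding maxel_def by (auto simp: order_le_less)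
    qed
  qed
qed

lemma sym_diff_in_verts:
  assumes "F \<in> faces"
  shows "sym_diff A F \<in> verts"
proof -
  have "F \<subseteq> M \<union> (B - A)"
    using assms unfolding faces_def by simp
  then show ?thesis
    using order_ideal_sym_diff_face[OF assms] A_subset_B M_subset_A unfolding verts_def by auto
qed

lemma bij_betw_sym_diff: "bij_betw (\<lambda>v. sym_diff A v) verts faces"
proof (rule bij_betw_byWitness[where f' = "\<lambda>F. sym_diff A F"])
  show "(\<lambda>v. sym_diff A v) ` verts \<subseteq> faces" "(\<lambda>F. sym_diff A F) ` faces \<subseteq> verts"
    using sym_diff_in_faces sym_diff_in_verts by blast+
qed auto

lemma flag_complex_faces: "flag_complex (M \<union> (B - A)) faces"
  unfolding flag_complex_def
proof (intro conjI ballI allI impI)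
  have "finite (M \<union> (B - A))"
    using finite_Q A_subset_Q B_subset_Q M_subset_A by (meson Diff_subset finite_Un finite_subset)
  then show "finite F" "F \<subseteq> M \<union> (B - A)" if "F \<in> faces" for F
    using that finite_subset unfolding faces_def by auto
  show "G \<in> faces" if "F \<in> faces" "G \<subseteq> F" for F G
    using that by (rule faces_downward_closed)
  show "{v} \<in> faces" if "v \<in> M \<union> (B - A)" for v
    using that unfolding faces_def by auto
  fix F assume F: "finite F \<and> F \<subseteq> M \<union> (B - A) \<and> (\<forall>x\<in>F. \<forall>y\<in>F. {x, y} \<in> faces)"
  then have "\<not> s < u" if "s \<in> F" "u \<in> F" "s \<in> A" "u \<notin> A" for s u
    using that unfolding faces_def by blast
  then show "F \<in> faces"
    using F unfolding faces_def by blast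
qed

lemma on_geodesic_between_cubes_iff:
  assumes v: "order_ideal Q v"
  shows "(\<exists>c\<in>cube_verts A M. \<exists>d\<in>cube_verts B N. on_geodesic Q c d v) \<longleftrightarrow> v \<in> verts"
proof
  assume "\<exists>c\<in>cube_verts A M. \<exists>d\<in>cube_verts B N. on_geodesic Q c d v"
  then obtain S T where S: "S \<subseteq> M" and T: "T \<subseteq> N" and geo: "on_geodesic Q (A - S) (B - T) v"
    unfolding cube_verts_def by blast
  have "order_ideal Q (A - S)" "order_ideal Q (B - T)"
    using S T M_eq N_subset order_ideal_Diff_maxel ideal_A ideal_B by blast+
  then have between: "(A - S) \<inter> (B - T) \<subseteq> v" "v \<subseteq> (A - S) \<union> (B - T)"
    using on_geodesic_iff[OF finite_Q _ _ v] geo by blast+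
  have "x \<notin> T" if "x \<in> A - M" for x
  proof
    assume "x \<in> T"
    then have "x \<in> maxel A"
      using that T N_subset A_subset_B unfolding maxel_def by auto
    then show False
      using that M_eq by simp
  qed
  then have "A - M \<subseteq> (A - S) \<inter> (B - T)"
    using S A_subset_B by auto
  then show "v \<in> verts"
    using between v A_subset_B unfolding verts_def by auto
next
  assume "v \<in> verts"
  then have vv: "A - M \<subseteq> v" "v \<subseteq> B"
    unfolding verts_def by auto
  have c: "A - (A - v) \<in> cube_verts A M" and d: "B - (N - v) \<in> cube_verts B N"
    unfolding cube_verts_def using vv by auto
  have "is_cube Q A M" "is_cube Q B N"
    using ideal_A ideal_B M_eq N_subset unfolding is_cube_def by auto
  then have "order_ideal Q (A - (A - v))" "order_ideal Q (B - (N - v))"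
    using c d order_ideal_cube_verts by blast+
  moreover have "(A - (A - v)) \<inter> (B - (N - v)) \<subseteq> v" "v \<subseteq> (A - (A - v)) \<union> (B - (N - v))"
    using vv by auto
  ultimately have "on_geodesic Q (A - (A - v)) (B - (N - v)) v"
    using on_geodesic_iff[OF finite_Q _ _ v] by blast
  then show "\<exists>c\<in>cube_verts A M. \<exists>d\<in>cube_verts B N. on_geodesic Q c d v"
    using c d by blast
qed

lemma interval_eq: "interval Q (cube_verts A M) (cube_verts B N) = {E \<in> cubes Q. E \<subseteq> verts}"
proof -
  have "order_ideal Q v" if "E \<in> cubes Q" "v \<in> E" for E v
    using that order_ideal_cube_verts unfolding cubes_def by blast
  then show ?thesis
    unfolding interval_def using on_geodesic_between_cubes_iff by blast
qed

lemma Union_interval: "\<Union>(interval Q (cube_verts A M) (cube_verts B N)) = verts"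
proof (intro equalityI subsetI)
  fix v assume "v \<in> verts"
  then have "is_cube Q v {}"
    unfolding verts_def is_cube_def by simp
  moreover have "cube_verts v {} = {v}"
    unfolding cube_verts_def by simp
  ultimately have "{v} \<in> cubes Q"
    unfolding cubes_def by blast
  then show "v \<in> \<Union>(interval Q (cube_verts A M) (cube_verts B N))"
    using \<open>v \<in> verts\<close> unfolding interval_eq by blast
qed (auto simp: interval_eq)

text \<open>The cube of X_Q whose image is the subcube of the face B' with the coordinates of A'
  set to 1.\<close>
lemma is_cube_of_face:
  assumes "A' \<subseteq> B'" "B' \<in> faces"
  shows "is_cube Q ((A - A') \<union> (B' - A)) (B' - A')"
proof -
  define I where "I = (A - A') \<union> (B' - A)"
  have B': "B' \<subseteq> M \<union> (B - A)" "\<And>s u. s \<in> B' \<Longrightarrow> u \<in> B' \<Longrightarrow> s \<in> A \<Longrightarrow> u \<notin> A \<Longrightarrow> \<not> s < u"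
    using assms(2) unfolding faces_def by auto
  have "(A' \<inter> A) \<union> (B' - A) \<subseteq> B'"
    using assms(1) by blast
  then have "sym_diff A ((A' \<inter> A) \<union> (B' - A)) \<in> verts"
    by (intro sym_diff_in_verts faces_downward_closed[OF assms(2)])
  moreover have "sym_diff A ((A' \<inter> A) \<union> (B' - A)) = I"
    unfolding I_def by blast
  ultimately have "I \<in> verts"
    by simp
  then have ideal: "order_ideal Q I" and "I \<subseteq> B"
    unfolding verts_def by auto
  have "x \<in> maxel I" if x: "x \<in> B' - A'" for x
  proof -
    have "\<not> x < y" if "y \<in> I" for y
    proof (cases "x \<in> A")
      case True
      then have "x \<in> maxel A"
        using x B'(1) M_eq by auto
      then show ?thesis
        using that x True B'(2)[of x y] unfolding I_def maxel_def by auto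
    next
      case False
      then have "x \<in> maxel B"
        using x B'(1) M_subset_A B_diff_A_subset N_subset by auto
      then show ?thesis
        using that \<open>I \<subseteq> B\<close> unfolding maxel_def by auto
    qed
    moreover have "x \<in> I"
      using x unfolding I_def by auto
    ultimately show ?thesis
      unfolding maxel_def by auto
  qed
  then show ?thesis
    using ideal unfolding is_cube_def I_def by blast
qed

lemma sym_diff_image_cube_of_face:
  assumes "A' \<subseteq> B'" "B' \<in> faces"
  shows "(\<lambda>v. sym_diff A v) ` cube_verts ((A - A') \<union> (B' - A)) (B' - A') = {S. A' \<subseteq> S \<and> S \<subseteq> B'}"
proof -
  define I where "I = (A - A') \<union> (B' - A)"
  have "B' \<subseteq> M \<union> (B - A)"
    using assms(2) unfolding faces_def by simp
  then have bounds: "sym_diff A I - ((B' - A') - A) = A'" "sym_diff A I \<union> ((B' - A') \<inter> A) = B'"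
    using assms(1) M_subset_A unfolding I_def by auto
  have "B' - A' \<subseteq> I"
    unfolding I_def by auto
  then show ?thesis
    unfolding I_def[symmetric] using sym_diff_image_cube_verts[of "B' - A'" I A] by (simp only: bounds)
qed

lemma sym_diff_image_interval:
  "(\<lambda>E. (\<lambda>v. sym_diff A v) ` E) ` interval Q (cube_verts A M) (cube_verts B N) = trunc_cubes faces"
proof (intro equalityI subsetI)
  fix C assume "C \<in> (\<lambda>E. (\<lambda>v. sym_diff A v) ` E) ` interval Q (cube_verts A M) (cube_verts B N)"
  then obtain E where E: "E \<in> cubes Q" "E \<subseteq> verts" and C: "C = (\<lambda>v. sym_diff A v) ` E"
    unfolding interval_eq by blast
  from E(1) obtain I M' where cube: "is_cube Q I M'" and E_eq: "E = cube_verts I M'"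
    unfolding cubes_def by blast
  have "M' \<subseteq> I"
    using cube maxel_subset unfolding is_cube_def by blast
  then have C_eq: "C = {W. sym_diff A I - (M' - A) \<subseteq> W \<and> W \<subseteq> sym_diff A I \<union> (M' \<inter> A)}"
    unfolding C E_eq by (rule sym_diff_image_cube_verts)
  define top where "top = sym_diff A I \<union> (M' \<inter> A)"
  have "top \<in> C"
    unfolding C_eq top_def by blast
  then obtain v where "v \<in> E" "top = sym_diff A v"
    unfolding C by blast
  then have "top \<in> faces"
    using E(2) sym_diff_in_faces by blast
  then show "C \<in> trunc_cubes faces"
    unfolding C_eq top_def[symmetric] by (rule trunc_cubesI[rotated]) (auto simp: top_def)
next
  fix C assume "C \<in> trunc_cubes faces"
  then obtain A' B' where AB': "A' \<subseteq> B'" "B' \<in> faces" and C: "C = {S. A' \<subseteq> S \<and> S \<subseteq> B'}"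
    by (rule trunc_cubesE)
  define E where "E = cube_verts ((A - A') \<union> (B' - A)) (B' - A')"
  have image: "(\<lambda>v. sym_diff A v) ` E = C"
    unfolding E_def C by (rule sym_diff_image_cube_of_face[OF AB'])
  have "E \<subseteq> verts"
  proof
    fix v assume "v \<in> E"
    then have "sym_diff A v \<in> C"
      unfolding image[symmetric] by (rule imageI)
    then have "sym_diff A v \<in> faces"
      unfolding C using faces_downward_closed[OF AB'(2)] by blast
    moreover have "sym_diff A (sym_diff A v) = v"
      by auto
    ultimately show "v \<in> verts"
      using sym_diff_in_verts by metis
  qed
  then have "E \<in> interval Q (cube_verts A M) (cube_verts B N)"
    using is_cube_of_face[OF AB'] unfolding interval_eq cubes_def E_def by blast
  then show "C \<in> (\<lambda>E. (\<lambda>v. sym_diff A v) ` E) ` interval Q (cube_verts A M) (cube_verts B N)"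
    by (rule image_eqI[where f = "\<lambda>E. (\<lambda>v. sym_diff A v) ` E", OF image[symmetric]])
qed

theorem trunc_orthant_space_interval:
  "trunc_orthant_space_with_origin (interval Q (cube_verts A M) (cube_verts B N)) A"
proof (rule trunc_orthant_space_with_originI)
  show "flag_complex (M \<union> (B - A)) faces"
    by (rule flag_complex_faces)
  show "countable (M \<union> (B - A))"
    using finite_Q A_subset_Q B_subset_Q M_subset_A
    by (meson Diff_subset countable_finite finite_Un finite_subset)
  show "bij_betw (\<lambda>v. sym_diff A v) (\<Union>(interval Q (cube_verts A M) (cube_verts B N))) faces"
    unfolding Union_interval by (rule bij_betw_sym_diff)
  show "A \<in> \<Union>(interval Q (cube_verts A M) (cube_verts B N))"
    unfolding Union_interval verts_def using ideal_A A_subset_B by blast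
qed (simp_all add: sym_diff_image_interval)

end

lemma maxel_eq_if_max_antichain:
  assumes "order_ideal Q I" "M \<subseteq> maxel I" "max_antichain Q M"
  shows "M = maxel I"
proof (rule ccontr)
  assume "M \<noteq> maxel I"
  then have "M \<subset> maxel I" "maxel I \<subseteq> Q"
    using assms(1,2) maxel_subset unfolding order_ideal_def by blast+
  moreover have "antichain (maxel I)"
    unfolding antichain_def maxel_def by (auto simp: order_le_less)
  ultimately show False
    using assms(3) unfolding max_antichain_def by blast
qed

lemma consecutive_cubes_if_valid_cube_seq:
  assumes "finite Q" "valid_cube_seq Q seq" "Suc i < length seq"
  shows "consecutive_cubes Q (fst (seq ! i)) (snd (seq ! i)) (fst (seq ! Suc i)) (snd (seq ! Suc i))"
proof -
  have cubes: "\<forall>j < length seq. is_cube Q (fst (seq ! j)) (snd (seq ! j))"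
    and chain: "\<forall>j. Suc j < length seq \<longrightarrow> fst (seq ! j) \<subset> fst (seq ! Suc j)"
    and steps: "\<forall>j. 0 < j \<and> j < length seq \<longrightarrow> fst (seq ! j) - fst (seq ! (j - 1)) \<subseteq> snd (seq ! j)"
    and antichains: "\<forall>j < length seq. max_antichain Q (snd (seq ! j))"
    using assms(2) unfolding valid_cube_seq_def by (meson, meson, meson, meson)
  have "fst (seq ! Suc i) - fst (seq ! i) \<subseteq> snd (seq ! Suc i)"
    using steps assms(3) by (metis diff_Suc_1 zero_less_Suc)
  moreover have "is_cube Q (fst (seq ! i)) (snd (seq ! i))" "is_cube Q (fst (seq ! Suc i)) (snd (seq ! Suc i))"
    using cubes assms(3) by simp_all
  moreover have "fst (seq ! i) \<subseteq> fst (seq ! Suc i)"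
    using chain assms(3) by blast
  moreover have "max_antichain Q (snd (seq ! i))"
    using antichains assms(3) by simp
  ultimately show ?thesis
    using assms(1) maxel_eq_if_max_antichain unfolding consecutive_cubes_def is_cube_def by blast
qed

theorem corollary5p5:
  fixes Q :: "'a::order set" and seq :: "('a set \<times> 'a set) list" and i :: nat
  assumes "finite Q"
    and "valid_cube_seq Q seq"
    and "Suc i < length seq"
  shows "trunc_orthant_space_with_origin
           (interval Q (cube_verts (fst (seq ! i)) (snd (seq ! i)))
                       (cube_verts (fst (seq ! Suc i)) (snd (seq ! Suc i))))
           (fst (seq ! i))"
  using consecutive_cubes_if_valid_cube_seq[OF assms]
  by (rule consecutive_cubes.trunc_orthant_space_interval)

end
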